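(* Let $X$ be a real Banach space and $Y$ a linear subspace of $X$ with norm $\|\cdot\|_Y$ such that $K:=U(Y)=\{g\in Y:\|g\|_Y\le1\}$ is compact in $X$, and let $C_0$ satisfy $\|g\|_X\le C_0\|g\|_Y$ for $g\in Y$. Let $\lambda_1,\dots,\lambda_m\in X^*$ with $\|\lambda_j\|_{X^*}=1$, $f\in K$, $w:=\lambda(f)$, and assume $R(K_w)_X\neq0$. Fix $\alpha>0$, $\beta>0$ and for $\mu>0$ define on $X$ $$\mathcal{L}'_\mu(g):=\|w-\lambda(g)\|^\alpha+\mu\|g\|_Y^\beta .$$ Let $C>2$. Then there is $\mu_0>0$ such that for all $0<\mu\le\mu_0$ the following hold. (a) If $\delta>0$ satisfies $\delta^\alpha\le\mu^2$, $\Sigma\subset X$ satisfies $\operatorname{dist}(K,\Sigma\cap K)_X<\delta$, and $\hat f\in\mathop{\rm argmin}_{g\in\Sigma}\mathcal{L}'_\mu(g)$ is any minimizer, then $\|f-\hat f\|_X\le C\,R(K_w)_X$. (b) If moreover $\epsilon>0$ and $\delta$ satisfy $\epsilon\le\delta^\alpha\le\frac12\mu^2$, $\Sigma$ and $\hat f$ are as in (a), and $\tilde f\in\Sigma$ satisfies $\mathcal{L}'_\mu(\tilde f)\le\mathcal{L}'_\mu(\hat f)+\epsilon$, then $\|f-\tilde f\|_X\le C\,R(K_w)_X$.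
   Context: Convention: $\|g\|_Y:=\infty$ for $g\in X\setminus Y$. $\lambda(g):=(\lambda_1(g),\dots,\lambda_m(g))$; on $\mathbb{R}^m$, $\|v\|:=\big[\frac1m\sum_{j=1}^m|v_j|^2\big]^{1/2}$. For $A,B\subset X$, $\operatorname{dist}(A,B)_X:=\sup_{a\in A}\inf_{b\in B}\|a-b\|_X$. $K_w:=\{h\in K:\lambda(h)=w\}$. For $S\subset X$, $R(S)_X:=\inf\{r:\ S\subset B(z,r)_X\text{ for some }z\in X\}$ (Chebyshev radius). *)

theory Defs
  imports "HOL-Analysis.Analysis"
begin

definition is_norm_on :: "'a::real_vector set \<Rightarrow> ('a \<Rightarrow> real) \<Rightarrow> bool" where
  "is_norm_on Y nY \<longleftrightarrow>
     (\<forall>x\<in>Y. 0 \<le> nY x) \<and>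
     (\<forall>x\<in>Y. nY x = 0 \<longleftrightarrow> x = 0) \<and>
     (\<forall>x\<in>Y. \<forall>c. nY (c *\<^sub>R x) = \<bar>c\<bar> * nY x) \<and>
     (\<forall>x\<in>Y. \<forall>y\<in>Y. nY (x + y) \<le> nY x + nY y)"

definition vnorm :: "nat \<Rightarrow> (nat \<Rightarrow> real) \<Rightarrow> real" where
  "vnorm m v = sqrt ((1 / real m) * (\<Sum>j<m. \<bar>v j\<bar>^2))"

definition cheb_radius :: "'a::real_normed_vector set \<Rightarrow> real" where
  "cheb_radius S = Inf {r. \<exists>z. S \<subseteq> cball z r}"

text \<open>One-sided distance dist(A,B)_X = sup_{a in A} inf_{b in B} norm(a - b), in ereal
  (infimum over the empty set is infinity).\<close>
definition set_dist :: "'a::real_normed_vector set \<Rightarrow> 'a set \<Rightarrow> ereal" where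
  "set_dist A B = (SUP a\<in>A. INF b\<in>B. ereal (norm (a - b)))"

text \<open>The functional L'_mu(g) = norm(w - lambda(g))^alpha + mu * norm_Y(g)^beta,
  with the convention norm_Y(g) = infinity for g outside Y.\<close>
definition Lprime :: "'a set \<Rightarrow> ('a \<Rightarrow> real) \<Rightarrow> nat \<Rightarrow> (nat \<Rightarrow> 'a \<Rightarrow> real) \<Rightarrow> (nat \<Rightarrow> real)
                      \<Rightarrow> real \<Rightarrow> real \<Rightarrow> real \<Rightarrow> 'a \<Rightarrow> ereal" where
  "Lprime Y nY m lam w \<alpha> \<beta> \<mu> g =
     (if g \<in> Y then ereal (vnorm m (\<lambda>j. w j - lam j g) powr \<alpha> + \<mu> * nY g powr \<beta>)
      else \<infinity>)"

end

theory Submission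
  imports Defs
begin

text \<open>Let R = R(K_w). Points of K_w are at distance at most 2R < CR from f, and by
  compactness of K this bound CR survives on a neighbourhood of the fibre: for some
  \<eta> > 0 it holds for every g \<in> Y with \<parallel>g\<parallel>_Y \<le> 1 + \<eta> and |\<lambda>_j(g) - w_j| \<le> \<eta>.
  Since \<Sigma> \<inter> K is \<delta>-dense in K, some point of \<Sigma> lies within \<delta> of f and has
  L'_\<mu> \<le> \<delta>^\<alpha> + \<mu> \<le> \<mu>^2 + \<mu>, so minimisers and \<epsilon>-minimisers g satisfy
  L'_\<mu>(g) \<le> \<mu> + 2\<mu>^2. For small \<mu> this forces \<parallel>g\<parallel>_Y^\<beta> \<le> 1 + 2\<mu> and
  \<parallel>w - \<lambda>(g)\<parallel>^\<alpha> \<le> 3\<mu>, which puts g into that neighbourhood.\<close>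

lemma powr_le_powr_imp_le:
  fixes x y p :: real
  assumes "0 < p" and "0 \<le> y" and "x powr p \<le> y powr p"
  shows "x \<le> y"
  using powr_less_mono2[OF assms(1,2), of x] assms(3) by linarith

lemma vnorm_nonneg: "0 \<le> vnorm m v"
  unfolding vnorm_def by (intro real_sqrt_ge_zero mult_nonneg_nonneg sum_nonneg) auto

lemma vnorm_le_if_abs_le:
  assumes "m \<ge> 1" and "\<forall>j<m. \<bar>v j\<bar> \<le> M"
  shows "vnorm m v \<le> M"
proof -
  have "0 \<le> M" using assms by (meson abs_ge_zero order_trans less_one less_le_trans)
  have "(\<Sum>j<m. \<bar>v j\<bar>^2) \<le> (\<Sum>j<m. M^2)"
    using assms(2) by (intro sum_mono power_mono) auto
  hence "(1 / real m) * (\<Sum>j<m. \<bar>v j\<bar>^2) \<le> M^2"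
    using assms(1) by (simp add: field_simps)
  hence "vnorm m v \<le> sqrt (M^2)" unfolding vnorm_def by (rule real_sqrt_le_mono)
  thus ?thesis using \<open>0 \<le> M\<close> by simp
qed

lemma abs_le_sqrt_mult_vnorm:
  assumes "j < m"
  shows "\<bar>v j\<bar> \<le> sqrt (real m) * vnorm m v"
proof -
  have "\<bar>v j\<bar>^2 \<le> (\<Sum>i<m. \<bar>v i\<bar>^2)"
    using assms by (intro member_le_sum) auto
  hence "sqrt (\<bar>v j\<bar>^2) \<le> sqrt (\<Sum>i<m. \<bar>v i\<bar>^2)" by (rule real_sqrt_le_mono)
  moreover have "sqrt (real m) * vnorm m v = sqrt (\<Sum>i<m. \<bar>v i\<bar>^2)"
    using assms unfolding vnorm_def by (simp add: real_sqrt_mult[symmetric])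
  ultimately show ?thesis by simp
qed

lemma vnorm_diff_le_norm_diff:
  assumes "m \<ge> 1" and "\<forall>j<m. bounded_linear (lam j) \<and> onorm (lam j) \<le> 1"
  shows "vnorm m (\<lambda>j. lam j f - lam j g) \<le> norm (f - g)"
proof (rule vnorm_le_if_abs_le[OF \<open>m \<ge> 1\<close>], intro allI impI)
  fix j assume "j < m"
  hence lin: "bounded_linear (lam j)" and "onorm (lam j) \<le> 1" using assms(2) by auto
  have "\<bar>lam j f - lam j g\<bar> = \<bar>lam j (f - g)\<bar>"
    by (simp add: linear_diff[OF bounded_linear.linear[OF lin]])
  also have "\<dots> \<le> onorm (lam j) * norm (f - g)" using onorm[OF lin] by simp
  also have "\<dots> \<le> norm (f - g)"
    using \<open>onorm (lam j) \<le> 1\<close> onorm_pos_le[OF lin] by (simp add: mult_left_le_one_le)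
  finally show "\<bar>lam j f - lam j g\<bar> \<le> norm (f - g)" .
qed

lemma norm_diff_le_two_cheb_radius:
  fixes S :: "'a::real_normed_vector set"
  assumes "bounded S" and "x \<in> S" and "y \<in> S"
  shows "norm (x - y) \<le> 2 * cheb_radius S"
proof -
  let ?radii = "{r. \<exists>z. S \<subseteq> cball z r}"
  have "?radii \<noteq> {}" using \<open>bounded S\<close> unfolding bounded_subset_cball by blast
  moreover have "norm (x - y) / 2 \<le> r" if "r \<in> ?radii" for r
  proof -
    obtain z where "S \<subseteq> cball z r" using \<open>r \<in> ?radii\<close> by blast
    hence "dist z x \<le> r" "dist z y \<le> r" using assms by auto
    moreover have "norm (x - y) \<le> dist z x + dist z y"
      by (metis dist_norm dist_commute dist_triangle)
    ultimately show ?thesis by simp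
  qed
  ultimately have "norm (x - y) / 2 \<le> Inf ?radii" by (rule cInf_greatest)
  thus ?thesis unfolding cheb_radius_def by simp
qed

lemma norm_diff_less_cheb_radius:
  fixes S :: "'a::real_normed_vector set"
  assumes "bounded S" and "x \<in> S" and "y \<in> S" and "cheb_radius S \<noteq> 0" and "C > 2"
  shows "norm (x - y) < C * cheb_radius S"
proof -
  have "0 < cheb_radius S"
    using norm_diff_le_two_cheb_radius[OF assms(1,2,2)] assms(4) by simp
  hence "2 * cheb_radius S < C * cheb_radius S" using assms(5) by simp
  thus ?thesis using norm_diff_le_two_cheb_radius[OF assms(1-3)] by linarith
qed

lemma set_dist_less_obtain:
  assumes "a \<in> A" and "set_dist A B < ereal d"
  obtains b where "b \<in> B" and "norm (a - b) < d"
proof -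
  have "(INF b\<in>B. ereal (norm (a - b))) \<le> set_dist A B"
    unfolding set_dist_def using \<open>a \<in> A\<close> by (rule SUP_upper)
  hence "(INF b\<in>B. ereal (norm (a - b))) < ereal d"
    using assms(2) by (rule order.strict_trans1)
  thus ?thesis using that unfolding INF_less_iff by auto
qed

lemma is_norm_on_nonneg: "is_norm_on Y nY \<Longrightarrow> g \<in> Y \<Longrightarrow> 0 \<le> nY g"
  by (simp add: is_norm_on_def)

lemma is_norm_on_scaleR_inverse_le_one:
  assumes "subspace Y" and "is_norm_on Y nY" and "g \<in> Y" and "nY g \<le> c" and "c > 0"
  shows "inverse c *\<^sub>R g \<in> Y" and "nY (inverse c *\<^sub>R g) \<le> 1"
proof -
  show "inverse c *\<^sub>R g \<in> Y" using assms by (simp add: subspace_scale)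
  have "nY (inverse c *\<^sub>R g) = inverse c * nY g"
    using assms(2,3,5) unfolding is_norm_on_def by simp
  also have "\<dots> \<le> 1" using assms(4,5) by (simp add: field_simps)
  finally show "nY (inverse c *\<^sub>R g) \<le> 1" .
qed

lemma compact_unit_ball_convergent_subseq:
  fixes Y :: "'a::real_normed_vector set"
  assumes "subspace Y" and "is_norm_on Y nY" and "compact {g\<in>Y. nY g \<le> 1}"
    and "\<And>n. g n \<in> Y" and "\<And>n. nY (g n) \<le> 1 + e n" and "\<And>n. 0 \<le> e n"
    and "e \<longlonglongrightarrow> 0"
  obtains l r where "l \<in> Y" and "nY l \<le> 1" and "strict_mono r" and "(g \<circ> r) \<longlonglongrightarrow> l"
proof -
  define h where "h n = inverse (1 + e n) *\<^sub>R g n" for n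
  have "h n \<in> {g\<in>Y. nY g \<le> 1}" for n
    unfolding h_def using is_norm_on_scaleR_inverse_le_one[OF assms(1,2,4,5)] assms(6)
    by (simp add: add_pos_nonneg)
  then obtain l r where l: "l \<in> {g\<in>Y. nY g \<le> 1}" and r: "strict_mono r"
      and hl: "(h \<circ> r) \<longlonglongrightarrow> l"
    using seq_compactE[OF compact_imp_seq_compact[OF assms(3)]] by metis
  have "(\<lambda>n. (1 + e (r n)) *\<^sub>R h (r n)) \<longlonglongrightarrow> (1 + 0) *\<^sub>R l"
    using LIMSEQ_subseq_LIMSEQ[OF assms(7) r] hl
    by (intro tendsto_scaleR tendsto_add) (auto simp: o_def)
  moreover have "(1 + e n) *\<^sub>R h n = g n" for n
    unfolding h_def using assms(6)[of n] by (simp add: add_nonneg_eq_0_iff)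
  ultimately have "(g \<circ> r) \<longlonglongrightarrow> l" by (simp add: o_def)
  thus ?thesis using that l r by blast
qed

lemma compact_unit_ball_near_fibre:
  fixes Y :: "'a::real_normed_vector set"
  assumes "subspace Y" and "is_norm_on Y nY" and "compact {g\<in>Y. nY g \<le> 1}"
    and "\<forall>j<m. continuous_on UNIV (lam j)"
    and "\<forall>h\<in>Y. nY h \<le> 1 \<and> (\<forall>j<m. lam j h = w j) \<longrightarrow> norm (f - h) < r"
  shows "\<exists>\<eta>>0. \<forall>g\<in>Y. nY g \<le> 1 + \<eta> \<and> (\<forall>j<m. \<bar>lam j g - w j\<bar> \<le> \<eta>)
           \<longrightarrow> norm (f - g) \<le> r"
proof (rule ccontr)
  define e where "e n = inverse (real (Suc n))" for n
  assume "\<not> ?thesis"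
  hence "\<forall>n. \<exists>g\<in>Y. nY g \<le> 1 + e n \<and> (\<forall>j<m. \<bar>lam j g - w j\<bar> \<le> e n) \<and> r < norm (f - g)"
    unfolding e_def by (auto simp: not_le)
  then obtain g where gY: "\<And>n. g n \<in> Y" and g_nY: "\<And>n. nY (g n) \<le> 1 + e n"
      and g_lam: "\<And>n j. j < m \<Longrightarrow> \<bar>lam j (g n) - w j\<bar> \<le> e n"
      and g_far: "\<And>n. r < norm (f - g n)"
    by metis
  have e0: "e \<longlonglongrightarrow> 0" unfolding e_def by (rule LIMSEQ_inverse_real_of_nat)
  obtain l s where "l \<in> Y" "nY l \<le> 1" "strict_mono s" and gl: "(g \<circ> s) \<longlonglongrightarrow> l"
    using compact_unit_ball_convergent_subseq[OF assms(1-3) gY g_nY _ e0] unfolding e_def by auto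
  have "lam j l = w j" if "j < m" for j
  proof -
    have "(\<lambda>n. \<bar>lam j ((g \<circ> s) n) - w j\<bar>) \<longlonglongrightarrow> \<bar>lam j l - w j\<bar>"
      using assms(4) \<open>j < m\<close>
      by (intro tendsto_rabs tendsto_diff continuous_on_tendsto_compose[OF _ gl] tendsto_const) auto
    moreover have "(e \<circ> s) \<longlonglongrightarrow> 0" using LIMSEQ_subseq_LIMSEQ[OF e0 \<open>strict_mono s\<close>] .
    ultimately have "\<bar>lam j l - w j\<bar> \<le> 0"
      by (rule LIMSEQ_le) (use g_lam \<open>j < m\<close> in auto)
    thus ?thesis by simp
  qed
  hence "norm (f - l) < r" using assms(5) \<open>l \<in> Y\<close> \<open>nY l \<le> 1\<close> by blast
  moreover have "r \<le> norm (f - l)"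
    using g_far by (intro LIMSEQ_le[OF tendsto_const tendsto_norm[OF tendsto_diff[OF tendsto_const gl]]])
      (auto intro: less_imp_le)
  ultimately show False by simp
qed

lemma small_Lprime_imp_near_fibre:
  assumes "is_norm_on Y nY" and "m \<ge> 1" and "\<alpha> > 0" and "\<beta> > 0" and "\<eta> > 0"
  shows "\<exists>\<mu>0>0. \<forall>\<mu> g. 0 < \<mu> \<and> \<mu> \<le> \<mu>0 \<and> Lprime Y nY m lam w \<alpha> \<beta> \<mu> g \<le> ereal (\<mu> + 2 * \<mu>^2)
           \<longrightarrow> g \<in> Y \<and> nY g \<le> 1 + \<eta> \<and> (\<forall>j<m. \<bar>lam j g - w j\<bar> \<le> \<eta>)"
proof -
  \<comment> \<open>For \<mu> \<le> \<mu>0: 1 + 2\<mu> \<le> (1 + \<eta>)^\<beta> and \<mu> + 2\<mu>^2 \<le> 3\<mu> \<le> (\<eta>/\<surd>m)^\<alpha>.\<close>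
  define \<mu>0 where
    "\<mu>0 = min 1 (min (((1 + \<eta>) powr \<beta> - 1) / 2) ((\<eta> / sqrt (real m)) powr \<alpha> / 3))"
  have "\<mu>0 > 0" using assms by (simp add: \<mu>0_def)
  moreover have "g \<in> Y \<and> nY g \<le> 1 + \<eta> \<and> (\<forall>j<m. \<bar>lam j g - w j\<bar> \<le> \<eta>)"
    if "0 < \<mu>" and "\<mu> \<le> \<mu>0" and L: "Lprime Y nY m lam w \<alpha> \<beta> \<mu> g \<le> ereal (\<mu> + 2 * \<mu>^2)"
    for \<mu> g
  proof -
    have "g \<in> Y" using L by (auto simp: Lprime_def split: if_splits)
    define a where "a = vnorm m (\<lambda>j. w j - lam j g)"
    have sum: "a powr \<alpha> + \<mu> * nY g powr \<beta> \<le> \<mu> + 2 * \<mu>^2"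
      using L \<open>g \<in> Y\<close> by (simp add: Lprime_def a_def)
    have "\<mu>^2 \<le> \<mu>" using \<open>0 < \<mu>\<close> \<open>\<mu> \<le> \<mu>0\<close>
      by (simp add: power2_eq_square mult_le_cancel_left1 \<mu>0_def)
    moreover have "0 \<le> \<mu> * nY g powr \<beta>" using \<open>0 < \<mu>\<close> by simp
    ultimately have "a powr \<alpha> \<le> (\<eta> / sqrt (real m)) powr \<alpha>"
      using sum \<open>\<mu> \<le> \<mu>0\<close> unfolding \<mu>0_def by linarith
    hence a_le: "a \<le> \<eta> / sqrt (real m)"
      using powr_le_powr_imp_le[OF assms(3)] assms(5) by simp
    have "\<bar>lam j g - w j\<bar> \<le> \<eta>" if "j < m" for j
    proof -
      have "\<bar>lam j g - w j\<bar> \<le> sqrt (real m) * a"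
        using abs_le_sqrt_mult_vnorm[OF \<open>j < m\<close>] unfolding a_def by (simp add: abs_minus_commute)
      also have "\<dots> \<le> \<eta>" using a_le assms(2) by (simp add: field_simps)
      finally show ?thesis .
    qed
    moreover have "nY g powr \<beta> \<le> (1 + \<eta>) powr \<beta>"
    proof -
      have "\<mu> * nY g powr \<beta> \<le> \<mu> + 2 * \<mu>^2" using sum powr_ge_zero[of a \<alpha>] by linarith
      also have "\<dots> = \<mu> * (1 + 2 * \<mu>)" by (simp add: algebra_simps power2_eq_square)
      finally have "\<mu> * nY g powr \<beta> \<le> \<mu> * (1 + 2 * \<mu>)" .
      hence "nY g powr \<beta> \<le> 1 + 2 * \<mu>" using \<open>0 < \<mu>\<close> by simp
      also have "\<dots> \<le> (1 + \<eta>) powr \<beta>" using \<open>\<mu> \<le> \<mu>0\<close> unfolding \<mu>0_def by simp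
      finally show ?thesis .
    qed
    hence "nY g \<le> 1 + \<eta>"
      using powr_le_powr_imp_le[OF assms(4)] assms(5) by simp
    ultimately show ?thesis using \<open>g \<in> Y\<close> by blast
  qed
  ultimately show ?thesis by blast
qed

lemma Lprime_small_on_approximating_set:
  assumes "m \<ge> 1" and "\<forall>j<m. bounded_linear (lam j) \<and> onorm (lam j) \<le> 1"
    and "is_norm_on Y nY" and "0 \<le> \<alpha>" and "0 \<le> \<beta>" and "0 \<le> \<mu>"
    and "f \<in> Y" and "nY f \<le> 1"
    and "set_dist {g\<in>Y. nY g \<le> 1} (\<Sigma> \<inter> {g\<in>Y. nY g \<le> 1}) < ereal \<delta>"
    and "\<delta> powr \<alpha> \<le> \<mu>^2"
  shows "\<exists>g\<in>\<Sigma>. Lprime Y nY m lam (\<lambda>j. lam j f) \<alpha> \<beta> \<mu> g \<le> ereal (\<mu>^2 + \<mu>)"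
proof -
  obtain g where g: "g \<in> \<Sigma>" "g \<in> Y" "nY g \<le> 1" and "norm (f - g) < \<delta>"
    using set_dist_less_obtain[OF _ assms(9)] assms(7,8) by blast
  have "vnorm m (\<lambda>j. lam j f - lam j g) powr \<alpha> \<le> norm (f - g) powr \<alpha>"
    using vnorm_diff_le_norm_diff[OF assms(1,2)] vnorm_nonneg assms(4) by (intro powr_mono2) auto
  also have "\<dots> \<le> \<delta> powr \<alpha>" using \<open>norm (f - g) < \<delta>\<close> assms(4) by (intro powr_mono2) auto
  finally have "vnorm m (\<lambda>j. lam j f - lam j g) powr \<alpha> \<le> \<mu>^2" using assms(10) by simp
  moreover have "\<mu> * nY g powr \<beta> \<le> \<mu>"
    using g is_norm_on_nonneg[OF assms(3)] assms(5,6) by (simp add: mult_left_le powr_le1)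
  ultimately show ?thesis using g by (intro bexI[of _ g]) (auto simp: Lprime_def)
qed

lemma small_Lprime_imp_close:
  fixes Y :: "'a::real_normed_vector set"
  assumes "subspace Y" and "is_norm_on Y nY" and "compact {g\<in>Y. nY g \<le> 1}"
    and "m \<ge> 1" and "\<forall>j<m. continuous_on UNIV (lam j)" and "\<alpha> > 0" and "\<beta> > 0"
    and "\<forall>h\<in>Y. nY h \<le> 1 \<and> (\<forall>j<m. lam j h = w j) \<longrightarrow> norm (f - h) < r"
  shows "\<exists>\<mu>0>0. \<forall>\<mu> g. 0 < \<mu> \<and> \<mu> \<le> \<mu>0 \<and> Lprime Y nY m lam w \<alpha> \<beta> \<mu> g \<le> ereal (\<mu> + 2 * \<mu>^2)
           \<longrightarrow> norm (f - g) \<le> r"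
proof -
  obtain \<eta> where "\<eta> > 0" and near_fibre_close:
      "\<forall>g\<in>Y. nY g \<le> 1 + \<eta> \<and> (\<forall>j<m. \<bar>lam j g - w j\<bar> \<le> \<eta>) \<longrightarrow> norm (f - g) \<le> r"
    using compact_unit_ball_near_fibre[OF assms(1-3,5,8)] by blast
  then obtain \<mu>0 where "\<mu>0 > 0" and
      "\<forall>\<mu> g. 0 < \<mu> \<and> \<mu> \<le> \<mu>0 \<and> Lprime Y nY m lam w \<alpha> \<beta> \<mu> g \<le> ereal (\<mu> + 2 * \<mu>^2)
         \<longrightarrow> g \<in> Y \<and> nY g \<le> 1 + \<eta> \<and> (\<forall>j<m. \<bar>lam j g - w j\<bar> \<le> \<eta>)"
    using small_Lprime_imp_near_fibre[OF assms(2,4,6,7)] by blast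
  thus ?thesis using near_fibre_close by blast
qed

lemma Lprime_near_minimiser_small:
  assumes "m \<ge> 1" and "\<forall>j<m. bounded_linear (lam j) \<and> onorm (lam j) \<le> 1"
    and "is_norm_on Y nY" and "0 \<le> \<alpha>" and "0 \<le> \<beta>" and "0 \<le> \<mu>"
    and "f \<in> Y" and "nY f \<le> 1"
    and "set_dist {g\<in>Y. nY g \<le> 1} (\<Sigma> \<inter> {g\<in>Y. nY g \<le> 1}) < ereal \<delta>"
    and "\<delta> powr \<alpha> \<le> \<mu>^2"
    and "\<forall>g\<in>\<Sigma>. Lprime Y nY m lam (\<lambda>j. lam j f) \<alpha> \<beta> \<mu> fh \<le> Lprime Y nY m lam (\<lambda>j. lam j f) \<alpha> \<beta> \<mu> g"
    and "Lprime Y nY m lam (\<lambda>j. lam j f) \<alpha> \<beta> \<mu> ft \<le> Lprime Y nY m lam (\<lambda>j. lam j f) \<alpha> \<beta> \<mu> fh + ereal \<epsilon>"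
    and "\<epsilon> \<le> \<mu>^2"
  shows "Lprime Y nY m lam (\<lambda>j. lam j f) \<alpha> \<beta> \<mu> ft \<le> ereal (\<mu> + 2 * \<mu>^2)"
proof -
  let ?L = "Lprime Y nY m lam (\<lambda>j. lam j f) \<alpha> \<beta> \<mu>"
  obtain g where "g \<in> \<Sigma>" and "?L g \<le> ereal (\<mu>^2 + \<mu>)"
    using Lprime_small_on_approximating_set[OF assms(1-10)] by blast
  have "?L ft \<le> ?L fh + ereal \<epsilon>" by fact
  also have "\<dots> \<le> ?L g + ereal \<epsilon>" using assms(11) \<open>g \<in> \<Sigma>\<close> by (intro add_right_mono) blast
  also have "\<dots> \<le> ereal (\<mu>^2 + \<mu>) + ereal \<epsilon>" by (intro add_right_mono) fact
  also have "\<dots> \<le> ereal (\<mu> + 2 * \<mu>^2)" using assms(13) by simp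
  finally show ?thesis .
qed

theorem theorem6p2:
  fixes Y :: "'a::banach set" and nY :: "'a \<Rightarrow> real" and C0 :: real
    and m :: nat and lam :: "nat \<Rightarrow> 'a \<Rightarrow> real" and f :: 'a
    and \<alpha> \<beta> C :: real
  defines "K \<equiv> {g\<in>Y. nY g \<le> 1}"
  defines "w \<equiv> (\<lambda>j. lam j f)"
  defines "Kw \<equiv> {h\<in>K. \<forall>j<m. lam j h = w j}"
  defines "L \<equiv> Lprime Y nY m lam w \<alpha> \<beta>"
  assumes Y_sub: "subspace Y"
    and nY_norm: "is_norm_on Y nY"
    and K_compact: "compact K"
    and C0: "\<forall>g\<in>Y. norm g \<le> C0 * nY g"
    and m_pos: "m \<ge> 1"
    and lam_lin: "\<forall>j<m. bounded_linear (lam j)"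
    and lam_norm: "\<forall>j<m. onorm (lam j) = 1"
    and f_K: "f \<in> K"
    and R_nz: "cheb_radius Kw \<noteq> 0"
    and \<alpha>_pos: "\<alpha> > 0" and \<beta>_pos: "\<beta> > 0"
    and C_gt: "C > 2"
  shows "\<exists>\<mu>0>0. \<forall>\<mu>. 0 < \<mu> \<and> \<mu> \<le> \<mu>0 \<longrightarrow>
     (\<forall>\<delta> \<Sigma> fh. \<delta> > 0 \<and> \<delta> powr \<alpha> \<le> \<mu>^2 \<and> set_dist K (\<Sigma> \<inter> K) < ereal \<delta>
          \<and> fh \<in> \<Sigma> \<and> (\<forall>g\<in>\<Sigma>. L \<mu> fh \<le> L \<mu> g)
        \<longrightarrow> norm (f - fh) \<le> C * cheb_radius Kw)
   \<and> (\<forall>\<epsilon> \<delta> \<Sigma> fh ft. \<epsilon> > 0 \<and> \<delta> > 0 \<and> \<epsilon> \<le> \<delta> powr \<alpha> \<and> \<delta> powr \<alpha> \<le> \<mu>^2 / 2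
          \<and> set_dist K (\<Sigma> \<inter> K) < ereal \<delta>
          \<and> fh \<in> \<Sigma> \<and> (\<forall>g\<in>\<Sigma>. L \<mu> fh \<le> L \<mu> g)
          \<and> ft \<in> \<Sigma> \<and> L \<mu> ft \<le> L \<mu> fh + ereal \<epsilon>
        \<longrightarrow> norm (f - ft) \<le> C * cheb_radius Kw)"
proof -
  define R where "R = cheb_radius Kw"
  have "bounded Kw"
    using compact_imp_bounded[OF K_compact] by (rule bounded_subset) (auto simp: Kw_def)
  moreover have "f \<in> Kw" using f_K by (simp add: Kw_def w_def)
  ultimately have "\<forall>h\<in>Y. nY h \<le> 1 \<and> (\<forall>j<m. lam j h = w j) \<longrightarrow> norm (f - h) < C * R"
    using norm_diff_less_cheb_radius[OF _ _ _ R_nz C_gt] by (simp add: R_def K_def Kw_def)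
  moreover have "\<forall>j<m. continuous_on UNIV (lam j)"
    using lam_lin by (simp add: linear_continuous_on)
  ultimately obtain \<mu>0 where "\<mu>0 > 0" and sublevel_close:
      "\<forall>\<mu> g. 0 < \<mu> \<and> \<mu> \<le> \<mu>0 \<and> L \<mu> g \<le> ereal (\<mu> + 2 * \<mu>^2) \<longrightarrow> norm (f - g) \<le> C * R"
    using small_Lprime_imp_close[OF Y_sub nY_norm K_compact[unfolded K_def] m_pos _ \<alpha>_pos \<beta>_pos]
    unfolding L_def by blast
  have lam_contraction: "\<forall>j<m. bounded_linear (lam j) \<and> onorm (lam j) \<le> 1"
    using lam_lin lam_norm by simp
  have near_minimiser_close: "norm (f - ft) \<le> C * R"
    if "0 < \<mu>" and "\<mu> \<le> \<mu>0" and "set_dist K (\<Sigma> \<inter> K) < ereal \<delta>" and "\<delta> powr \<alpha> \<le> \<mu>^2"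
      and "\<forall>g\<in>\<Sigma>. L \<mu> fh \<le> L \<mu> g" and "L \<mu> ft \<le> L \<mu> fh + ereal \<epsilon>" and "\<epsilon> \<le> \<mu>^2"
    for \<mu> \<delta> \<Sigma> fh ft \<epsilon>
    using Lprime_near_minimiser_small[OF m_pos lam_contraction nY_norm, of \<alpha> \<beta> \<mu> f \<Sigma> \<delta> fh ft \<epsilon>]
      sublevel_close that f_K \<alpha>_pos \<beta>_pos unfolding K_def L_def w_def by simp
  show ?thesis unfolding R_def[symmetric]
  proof (intro exI[of _ \<mu>0] conjI \<open>\<mu>0 > 0\<close> allI impI; elim conjE)
    fix \<mu> \<delta> \<Sigma> fh
    assume \<mu>: "0 < \<mu>" "\<mu> \<le> \<mu>0" and "\<delta> > 0" and \<delta>: "\<delta> powr \<alpha> \<le> \<mu>^2"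
      and approx: "set_dist K (\<Sigma> \<inter> K) < ereal \<delta>" and "fh \<in> \<Sigma>"
      and minimal: "\<forall>g\<in>\<Sigma>. L \<mu> fh \<le> L \<mu> g"
    show "norm (f - fh) \<le> C * R"
      using near_minimiser_close[OF \<mu> approx \<delta> minimal, where ft = fh and \<epsilon> = 0] by simp
  next
    fix \<mu> \<epsilon> \<delta> \<Sigma> fh ft
    assume \<mu>: "0 < \<mu>" "\<mu> \<le> \<mu>0" and "\<epsilon> > 0" "\<delta> > 0" "\<epsilon> \<le> \<delta> powr \<alpha>" "\<delta> powr \<alpha> \<le> \<mu>^2 / 2"
      and approx: "set_dist K (\<Sigma> \<inter> K) < ereal \<delta>" and "fh \<in> \<Sigma>"
      and minimal: "\<forall>g\<in>\<Sigma>. L \<mu> fh \<le> L \<mu> g" and "ft \<in> \<Sigma>"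
      and near_minimal: "L \<mu> ft \<le> L \<mu> fh + ereal \<epsilon>"
    have \<delta>: "\<delta> powr \<alpha> \<le> \<mu>^2" and \<epsilon>: "\<epsilon> \<le> \<mu>^2"
      using \<open>\<epsilon> \<le> \<delta> powr \<alpha>\<close> \<open>\<delta> powr \<alpha> \<le> \<mu>^2 / 2\<close> powr_ge_zero[of \<delta> \<alpha>] by linarith+
    show "norm (f - ft) \<le> C * R"
      using near_minimiser_close[OF \<mu> approx \<delta> minimal near_minimal \<epsilon>] .
  qed
qed

end
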